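(* Let $p,n\in\mathbb N$ with $p\ge n\ge 10$, and write $p=k(n-1)+r$ with $k\in\mathbb N$ and $r\in\{0,1,2,n-5,n-4,n-3,n-2\}$. Then $$\mathrm{ex}(p;T_n^3)=\frac{(n-2)p-r(n-1-r)}2.$$
   Context: All graphs are finite simple graphs. For a graph $L$, $\mathrm{ex}(p;L)$ denotes the maximum number of edges in a graph on $p$ vertices that contains no subgraph isomorphic to $L$. For $n\ge 6$, $T_n^3$ is the tree on vertex set $\{v_0,\ldots,v_{n-1}\}$ with edge set $\{v_0v_1,v_0v_2,\ldots,v_0v_{n-4},\ v_1v_{n-3},\ v_1v_{n-2},\ v_1v_{n-1}\}$. $\mathbb N=\{1,2,\ldots\}$. *)

theory Defs
  imports Main
begin

definition simple_graph :: "'a set \<Rightarrow> 'a set set \<Rightarrow> bool" where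
  "simple_graph V E \<longleftrightarrow> finite V \<and> (\<forall>e\<in>E. \<exists>u v. e = {u, v} \<and> u \<noteq> v \<and> u \<in> V \<and> v \<in> V)"

definition contains_subgraph :: "'a set \<Rightarrow> 'a set set \<Rightarrow> 'b set \<Rightarrow> 'b set set \<Rightarrow> bool" where
  "contains_subgraph V E VL EL \<longleftrightarrow>
     (\<exists>f. inj_on f VL \<and> f ` VL \<subseteq> V \<and> (\<forall>e\<in>EL. f ` e \<in> E))"

definition ex :: "nat \<Rightarrow> 'b set \<Rightarrow> 'b set set \<Rightarrow> nat" where
  "ex p VL EL = Max {card E | E. simple_graph {0..<p} E \<and> \<not> contains_subgraph {0..<p} E VL EL}"

definition T3_vertices :: "nat \<Rightarrow> nat set" where
  "T3_vertices n = {0..<n}"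

definition T3_edges :: "nat \<Rightarrow> nat set set" where
  "T3_edges n = {{0, i} | i. 1 \<le> i \<and> i \<le> n - 4} \<union> {{1, j} | j. n - 3 \<le> j \<and> j \<le> n - 1}"

end

theory Submission
  imports Defs
begin

text \<open>Write \<open>slack n E v = n - 2 - deg v\<close>, so the total slack of a graph on \<open>p\<close> vertices is
  \<open>(n - 2) p - 2 |E|\<close>. For a \<open>T_n^3\<close>-free graph on \<open>m\<close> vertices the total slack is at least
  \<open>deficit n m\<close>, a function of \<open>m mod (n - 1)\<close> that is subadditive and equals \<open>r (n - 1 - r)\<close>
  at the residues \<open>r \<in> {0, 1, 2, n - 5, \<dots>, n - 2}\<close>.
  The bound is proved by strong induction on the number of vertices: a nonempty \<open>T_n^3\<close>-free
  graph contains a nonempty set \<open>D\<close> (the whole graph, the closed neighbourhood of a vertex of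
  maximum degree, or the union of two neighbourhoods) whose slack, after paying for the edges
  leaving \<open>D\<close>, is at least \<open>deficit n |D|\<close>; removing \<open>D\<close> and using subadditivity closes the
  induction. The local fact behind every case is that adjacent vertices \<open>u\<close>, \<open>w\<close> with
  \<open>deg u \<ge> n - 4\<close> and \<open>deg w \<ge> 4\<close> have at most \<open>n - 1\<close> neighbours together, since otherwise
  \<open>T_n^3\<close> embeds with its two centres at \<open>u\<close> and \<open>w\<close>. Disjoint copies of \<open>K_{n-1}\<close> together
  with one \<open>K_r\<close> attain the bound.\<close>

section \<open>The deficit function\<close>

definition residue_deficit :: "int \<Rightarrow> int \<Rightarrow> int" where
  "residue_deficit N x =
     (if x = 0 then 0
      else if x = 1 \<or> x = N - 2 then N - 2
      else if x = 2 \<or> x = N - 3 then 2 * N - 6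
      else if x = N - 4 then 3 * N - 12
      else if x = N - 5 then 4 * N - 20
      else min (3 * N - 12) (2 * N - 2 + 2 * x))"

definition deficit :: "nat \<Rightarrow> nat \<Rightarrow> int" where
  "deficit n m = residue_deficit (int n) (int (m mod (n - 1)))"

lemma residue_deficit_add_le:
  assumes "10 \<le> N" "0 \<le> a" "a < N - 1" "0 \<le> b" "b < N - 1"
  shows "residue_deficit N (if a + b < N - 1 then a + b else a + b - (N - 1))
           \<le> residue_deficit N a + residue_deficit N b"
proof -
  have "a = 0 \<or> a = 1 \<or> a = N - 2 \<or> a = 2 \<or> a = N - 3 \<or> a = N - 4 \<or> a = N - 5 \<or> 3 \<le> a \<and> a \<le> N - 6"
   and "b = 0 \<or> b = 1 \<or> b = N - 2 \<or> b = 2 \<or> b = N - 3 \<or> b = N - 4 \<or> b = N - 5 \<or> 3 \<le> b \<and> b \<le> N - 6"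
    using assms by linarith+
  then show ?thesis
    using assms unfolding residue_deficit_def
    by (elim disjE; simp add: min_def split: if_split; arith)
qed

lemma residue_deficit_le_product:
  assumes "10 \<le> N" "0 \<le> x" "x \<le> N - 2"
  shows "residue_deficit N x \<le> x * (N - 1 - x)"
proof -
  have "x = 0 \<or> x = 1 \<or> x = N - 2 \<or> x = 2 \<or> x = N - 3 \<or> x = N - 4 \<or> x = N - 5 \<or> 3 \<le> x \<and> x \<le> N - 6"
    using assms by linarith
  then show ?thesis
  proof (elim disjE)
    assume x: "3 \<le> x \<and> x \<le> N - 6"
    have "0 \<le> (x - 3) * (N - 4 - x)"
      using x by simp
    then have "3 * N - 12 \<le> x * (N - 1 - x)"
      by (simp add: algebra_simps)
    then show ?thesis
      unfolding residue_deficit_def by (simp add: min_def)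
  qed (auto simp: residue_deficit_def algebra_simps)
qed

lemma deficit_add_le:
  assumes "10 \<le> n"
  shows "deficit n (x + y) \<le> deficit n x + deficit n y"
proof -
  define a where "a = x mod (n - 1)"
  define b where "b = y mod (n - 1)"
  have ab: "a < n - 1" "b < n - 1"
    using assms by (auto simp: a_def b_def)
  have "(x + y) mod (n - 1) = (a + b) mod (n - 1)"
    by (simp add: mod_add_eq a_def b_def)
  also have "\<dots> = (if a + b < n - 1 then a + b else a + b - (n - 1))"
    using ab by (simp add: le_mod_geq)
  finally have "int ((x + y) mod (n - 1))
      = (if int a + int b < int n - 1 then int a + int b else int a + int b - (int n - 1))"
    using assms by auto
  then show ?thesis
    unfolding deficit_def a_def[symmetric] b_def[symmetric]
    using residue_deficit_add_le[of "int n" "int a" "int b"] ab assms by simp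
qed

lemma deficit_le_product:
  assumes "10 \<le> n" "m \<le> n - 1"
  shows "deficit n m \<le> int m * (int n - 1 - int m)"
proof (cases "m = n - 1")
  case True
  then show ?thesis
    using assms by (simp add: deficit_def residue_deficit_def)
next
  case False
  then show ?thesis
    using residue_deficit_le_product[of "int n" "int m"] assms by (simp add: deficit_def)
qed

lemma deficit_le: "10 \<le> n \<Longrightarrow> deficit n m \<le> 4 * int n - 20"
  by (simp add: deficit_def residue_deficit_def min_def)

lemma deficit_le_twice:
  assumes "10 \<le> n" "n \<le> m"
  shows "deficit n m \<le> 2 * int m"
proof -
  define r where "r = m mod (n - 1)"
  have "n - 1 \<le> (n - 1) * (m div (n - 1))"
    using assms by (simp add: Suc_le_eq div_greater_zero_iff)
  then have "int n - 1 + int r \<le> int m" "int r \<le> int n - 2"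
    using mult_div_mod_eq[of "n - 1" m] mod_less_divisor[of "n - 1" m] assms
    unfolding r_def by linarith+
  then show ?thesis
    unfolding deficit_def r_def[symmetric] residue_deficit_def by (simp add: min_def)
qed

lemma deficit_0 [simp]: "deficit n 0 = 0"
  by (simp add: deficit_def residue_deficit_def)

lemma deficit_n_minus_1: "10 \<le> n \<Longrightarrow> deficit n (n - 1) = 0"
  by (simp add: deficit_def residue_deficit_def)

lemma deficit_n_minus_2: "10 \<le> n \<Longrightarrow> deficit n (n - 2) = int n - 2"
  by (simp add: deficit_def residue_deficit_def)

lemma deficit_extremal_residue:
  assumes "10 \<le> n" "p mod (n - 1) \<in> {0, 1, 2, n - 5, n - 4, n - 3, n - 2}"
  shows "deficit n p = int (p mod (n - 1)) * (int n - 1 - int (p mod (n - 1)))"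
  using assms by (auto simp: deficit_def residue_deficit_def algebra_simps)

definition nbhd :: "'a set set \<Rightarrow> 'a \<Rightarrow> 'a set" where
  "nbhd E v = {x. {v, x} \<in> E}"

lemma nbhd_sym: "x \<in> nbhd E v \<longleftrightarrow> v \<in> nbhd E x"
  by (simp add: nbhd_def insert_commute)

lemma simple_graph_edgeD:
  assumes "simple_graph V E" "{a, b} \<in> E"
  shows "a \<in> V" "b \<in> V" "a \<noteq> b"
  using assms unfolding simple_graph_def by (auto simp: doubleton_eq_iff)

lemma nbhd_subset: "simple_graph V E \<Longrightarrow> nbhd E v \<subseteq> V"
  unfolding nbhd_def using simple_graph_edgeD(2) by fast

lemma finite_nbhd: "simple_graph V E \<Longrightarrow> finite (nbhd E v)"
  using nbhd_subset finite_subset simple_graph_def by metis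

lemma not_in_nbhd: "simple_graph V E \<Longrightarrow> v \<notin> nbhd E v"
  unfolding nbhd_def using simple_graph_edgeD(3) by fast

lemma card_nbhd_le:
  assumes "simple_graph V E" "v \<in> V"
  shows "card (nbhd E v) \<le> card V - 1"
proof -
  have "nbhd E v \<subseteq> V - {v}"
    using nbhd_subset[OF assms(1)] not_in_nbhd[OF assms(1)] by auto
  then show ?thesis
    using assms card_mono[of "V - {v}"] by (auto simp: simple_graph_def)
qed

lemma card_nbhd_Un:
  assumes "simple_graph V E" "w \<in> nbhd E u"
  shows "card (nbhd E u \<union> nbhd E w) = card (nbhd E u) + 1 + card (nbhd E w - insert u (nbhd E u))"
proof -
  have "nbhd E u \<union> nbhd E w = insert u (nbhd E u) \<union> (nbhd E w - insert u (nbhd E u))"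
    using nbhd_sym[of w E u] assms(2) by auto
  also have "card \<dots> = card (insert u (nbhd E u)) + card (nbhd E w - insert u (nbhd E u))"
    using finite_nbhd[OF assms(1)] by (intro card_Un_disjoint) auto
  finally show ?thesis
    using finite_nbhd[OF assms(1)] not_in_nbhd[OF assms(1)] by simp
qed

lemma card_nbhd_eq_card_edges:
  assumes "simple_graph V E"
  shows "card (nbhd E v) = card {e \<in> E. v \<in> e}"
proof (rule bij_betw_same_card[of "\<lambda>x. {v, x}"], rule bij_betw_imageI)
  show "inj_on (\<lambda>x. {v, x}) (nbhd E v)"
    by (auto simp: inj_on_def doubleton_eq_iff)
  show "(\<lambda>x. {v, x}) ` nbhd E v = {e \<in> E. v \<in> e}"
  proof (intro equalityI subsetI)
    fix e
    assume "e \<in> (\<lambda>x. {v, x}) ` nbhd E v"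
    then show "e \<in> {e \<in> E. v \<in> e}"
      by (auto simp: nbhd_def)
  next
    fix e
    assume e: "e \<in> {e \<in> E. v \<in> e}"
    then obtain a b where ab: "e = {a, b}"
      using assms unfolding simple_graph_def by blast
    define x where "x = (if v = a then b else a)"
    have "e = {v, x}"
      using e ab by (auto simp: x_def)
    then show "e \<in> (\<lambda>x. {v, x}) ` nbhd E v"
      using e unfolding nbhd_def by (intro image_eqI[of _ _ x]) auto
  qed
qed

lemma sum_card_nbhd:
  assumes "simple_graph V E"
  shows "(\<Sum>v\<in>V. card (nbhd E v)) = 2 * card E"
proof -
  have fV: "finite V"
    using assms by (simp add: simple_graph_def)
  have edge: "card e = 2 \<and> e \<subseteq> V" if "e \<in> E" for e
    using that assms unfolding simple_graph_def by fastforce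
  then have fE: "finite E"
    using fV by (meson PowI finite_Pow_iff rev_finite_subset subsetI)
  have "card (nbhd E v) = (\<Sum>e\<in>E. if v \<in> e then 1 else 0)" for v
    using sum.inter_filter[OF fE, of "\<lambda>_. 1::nat" "\<lambda>e. v \<in> e"]
    by (simp add: card_nbhd_eq_card_edges[OF assms])
  then have "(\<Sum>v\<in>V. card (nbhd E v)) = (\<Sum>v\<in>V. \<Sum>e\<in>E. if v \<in> e then 1 else 0)"
    by simp
  also have "\<dots> = (\<Sum>e\<in>E. \<Sum>v\<in>V. if v \<in> e then 1 else 0)"
    by (rule sum.swap)
  also have "\<dots> = (\<Sum>e\<in>E. 2)"
    using fV edge by (intro sum.cong refl) (simp add: sum.If_cases Int_absorb1)
  finally show ?thesis
    by simp
qed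

lemma sum_card_nbhd_Int_swap:
  assumes "finite A" "finite B"
  shows "(\<Sum>v\<in>A. card (nbhd E v \<inter> B)) = (\<Sum>x\<in>B. card (nbhd E x \<inter> A))"
proof -
  have count: "card (nbhd E v \<inter> C) = (\<Sum>x\<in>C. if x \<in> nbhd E v then 1 else 0)" if "finite C" for v C
  proof -
    have "nbhd E v \<inter> C = {x \<in> C. x \<in> nbhd E v}"
      by blast
    then show ?thesis
      using sum.inter_filter[OF that, of "\<lambda>_. 1::nat" "\<lambda>x. x \<in> nbhd E v"] by simp
  qed
  have "(\<Sum>v\<in>A. card (nbhd E v \<inter> B)) = (\<Sum>v\<in>A. \<Sum>x\<in>B. if x \<in> nbhd E v then 1 else 0)"
    using count assms by simp
  also have "\<dots> = (\<Sum>x\<in>B. \<Sum>v\<in>A. if v \<in> nbhd E x then 1 else 0)"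
    by (subst sum.swap) (simp add: nbhd_sym)
  also have "\<dots> = (\<Sum>x\<in>B. card (nbhd E x \<inter> A))"
    using count assms by simp
  finally show ?thesis .
qed

lemma simple_graph_induced:
  assumes "simple_graph V E"
  shows "simple_graph (V - D) {e \<in> E. e \<subseteq> V - D}"
  unfolding simple_graph_def
proof (intro conjI ballI)
  fix e
  assume e: "e \<in> {e \<in> E. e \<subseteq> V - D}"
  then obtain u v where "e = {u, v}" "u \<noteq> v"
    using assms unfolding simple_graph_def by blast
  then show "\<exists>u v. e = {u, v} \<and> u \<noteq> v \<and> u \<in> V - D \<and> v \<in> V - D"
    using e by (intro exI[of _ u] exI[of _ v]) auto
qed (use assms simple_graph_def in auto)

lemma nbhd_induced:
  assumes "simple_graph V E" "v \<in> V - D"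
  shows "nbhd {e \<in> E. e \<subseteq> V - D} v = nbhd E v - D"
  using assms nbhd_subset[OF assms(1), of v] by (auto simp: nbhd_def)

lemma contains_subgraph_mono:
  assumes "contains_subgraph W F VL EL" "W \<subseteq> V" "F \<subseteq> E"
  shows "contains_subgraph V E VL EL"
proof -
  obtain f where "inj_on f VL" "f ` VL \<subseteq> W" "\<forall>e\<in>EL. f ` e \<in> F"
    using assms(1) unfolding contains_subgraph_def by blast
  then show ?thesis
    using assms(2,3) unfolding contains_subgraph_def by blast
qed

section \<open>Embedding the tree\<close>

lemma obtain_disjoint_subsets:
  assumes "finite X" "finite Y" "a \<le> card X" "b \<le> card Y" "a + b \<le> card (X \<union> Y)"
  obtains A B where "A \<subseteq> X" "B \<subseteq> Y" "card A = a" "card B = b" "A \<inter> B = {}"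
proof -
  obtain B1 where B1: "B1 \<subseteq> Y - X" "card B1 = min b (card (Y - X))"
    by (meson min.cobounded2 obtain_subset_with_card_n)
  obtain B2 where B2: "B2 \<subseteq> Y \<inter> X" "card B2 = b - card B1"
  proof (rule obtain_subset_with_card_n)
    have "card Y = card (Y \<inter> X) + card (Y - X)"
      using assms(2) by (rule card_Int_Diff)
    then show "b - card B1 \<le> card (Y \<inter> X)"
      using assms(4) B1(2) by linarith
  qed
  define B where "B = B1 \<union> B2"
  have fin: "finite B1" "finite B2"
    using B1(1) B2(1) assms(1,2) finite_subset by blast+
  have cB: "card B = b"
    unfolding B_def using B1 B2 fin card_Un_disjoint by fastforce
  have "card (X \<union> Y) = card X + card (Y - X)"
    using assms(1,2) card_Un_disjoint[of X "Y - X"] by (simp add: Un_Diff_cancel)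
  moreover have "card (X - B) = card X - card B2"
    using B1(1) B2(1) fin(2) by (subst card_Diff_subset[symmetric]) (auto simp: B_def intro: arg_cong[of _ _ card])
  ultimately have "a \<le> card (X - B)"
    using assms(3,5) B1(2) B2(2) by linarith
  then obtain A where "A \<subseteq> X - B" "card A = a"
    by (meson obtain_subset_with_card_n)
  then show ?thesis
    using that[of A B] cB B1(1) B2(1) by (auto simp: B_def)
qed

lemma contains_T3I:
  assumes "u \<in> V" "w \<in> V" "A \<subseteq> V" "B \<subseteq> V" "u \<noteq> w" "u \<notin> A \<union> B" "w \<notin> A \<union> B" "A \<inter> B = {}"
    and "{u, w} \<in> E" "A \<subseteq> nbhd E u" "B \<subseteq> nbhd E w"
    and "card A = n - 5" "card B = 3" "6 \<le> n"
  shows "contains_subgraph V E (T3_vertices n) (T3_edges n)"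
proof -
  have "finite A" "finite B"
    using assms(12-14) by (auto intro: card_ge_0_finite)
  then obtain as bs where as: "distinct as" "set as = A" and bs: "distinct bs" "set bs = B"
    using finite_distinct_list by metis
  have len: "length as = n - 5" "length bs = 3"
    using as bs assms(12,13) distinct_card by metis+
  define xs where "xs = u # w # as @ bs"
    \<comment> \<open>vertex \<open>v\<^sub>i\<close> of the tree goes to \<open>xs ! i\<close>\<close>
  have xs: "distinct xs" "length xs = n" "set xs \<subseteq> V"
    using as bs len assms(1-8,14) by (auto simp: xs_def)
  have "\<forall>e\<in>T3_edges n. nth xs ` e \<in> E"
  proof
    fix e
    assume "e \<in> T3_edges n"
    then consider i where "e = {0, i}" "1 \<le> i" "i \<le> n - 4"
      | j where "e = {1, j}" "n - 3 \<le> j" "j \<le> n - 1"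
      unfolding T3_edges_def by blast
    then show "nth xs ` e \<in> E"
    proof cases
      case (1 i)
      have "xs ! i = w \<or> xs ! i \<in> A"
        using 1 len as(2) by (cases i) (auto simp: xs_def nth_append nth_Cons')
      then show ?thesis
        using 1 assms(9,10) by (auto simp: xs_def nbhd_def)
    next
      case (2 j)
      have "xs ! j \<in> B"
        using 2 len bs(2) assms(14) by (auto simp: xs_def nth_append nth_Cons')
      then show ?thesis
        using 2 assms(11) by (auto simp: xs_def nbhd_def)
    qed
  qed
  moreover have "inj_on (nth xs) {0..<n}"
    using xs by (intro inj_on_nth) auto
  moreover have "nth xs ` {0..<n} \<subseteq> V"
    using xs nth_mem by fastforce
  ultimately show ?thesis
    unfolding contains_subgraph_def T3_vertices_def by blast
qed

section \<open>Peeling\<close>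

definition slack :: "nat \<Rightarrow> 'a set set \<Rightarrow> 'a \<Rightarrow> int" where
  "slack n E v = int n - 2 - int (card (nbhd E v))"

text \<open>Removing \<open>D\<close> raises the slack of each remaining vertex by its number of neighbours in \<open>D\<close>;
  a peelable set pays for these edges out of its own slack.\<close>

definition peelable :: "nat \<Rightarrow> 'a set set \<Rightarrow> 'a set \<Rightarrow> bool" where
  "peelable n E D \<longleftrightarrow>
     D \<noteq> {} \<and> deficit n (card D) \<le> (\<Sum>v\<in>D. slack n E v - int (card (nbhd E v - D)))"

lemma peelableI:
  assumes "D \<noteq> {}" "deficit n (card D) \<le> (\<Sum>v\<in>D. c v)"
    and "\<And>v. v \<in> D \<Longrightarrow> c v \<le> slack n E v - int (card (nbhd E v - D))"
  shows "peelable n E D"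
proof -
  have "(\<Sum>v\<in>D. c v) \<le> (\<Sum>v\<in>D. slack n E v - int (card (nbhd E v - D)))"
    by (rule sum_mono) (rule assms(3))
  then show ?thesis
    using assms(1,2) unfolding peelable_def by linarith
qed

locale T3_free =
  fixes V :: "'a set" and E :: "'a set set" and n :: nat
  assumes graph: "simple_graph V E"
    and free: "\<not> contains_subgraph V E (T3_vertices n) (T3_edges n)"
    and n_ge: "10 \<le> n"
begin

lemma finite_V: "finite V"
  using graph by (simp add: simple_graph_def)

lemma card_nbhd_Un_le:
  assumes "w \<in> nbhd E u" "n - 4 \<le> card (nbhd E u)" "4 \<le> card (nbhd E w)"
  shows "card (nbhd E u \<union> nbhd E w) \<le> n - 1"
proof (rule ccontr)
  assume big: "\<not> ?thesis"
  define X where "X = nbhd E u - {w}"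
  define Y where "Y = nbhd E w - {u}"
  have u: "u \<in> nbhd E w"
    using assms(1) nbhd_sym by fast
  have fin: "finite X" "finite Y"
    using finite_nbhd[OF graph] by (auto simp: X_def Y_def)
  have "X \<union> Y = (nbhd E u \<union> nbhd E w) - {u, w}"
    using not_in_nbhd[OF graph] by (auto simp: X_def Y_def)
  moreover have "card {u, w} = 2"
    using assms(1) not_in_nbhd[OF graph, of u] by (cases "u = w") auto
  ultimately have "n - 2 \<le> card (X \<union> Y)"
    using big assms(1) u finite_nbhd[OF graph] by (simp add: card_Diff_subset)
  moreover have "n - 5 \<le> card X" "3 \<le> card Y"
    using assms u finite_nbhd[OF graph] by (auto simp: X_def Y_def)
  ultimately obtain A B where AB: "A \<subseteq> X" "B \<subseteq> Y" "card A = n - 5" "card B = 3" "A \<inter> B = {}"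
    using obtain_disjoint_subsets[OF fin, of "n - 5" 3] n_ge by auto
  have "contains_subgraph V E (T3_vertices n) (T3_edges n)"
  proof (rule contains_T3I)
    show "u \<in> V" "w \<in> V"
      using nbhd_subset[OF graph] assms(1) u by blast+
    show "A \<subseteq> V" "B \<subseteq> V"
      using AB nbhd_subset[OF graph, of u] nbhd_subset[OF graph, of w] by (auto simp: X_def Y_def)
    show "u \<noteq> w" "u \<notin> A \<union> B" "w \<notin> A \<union> B"
      using AB not_in_nbhd[OF graph] assms(1) by (auto simp: X_def Y_def)
    show "{u, w} \<in> E" "A \<subseteq> nbhd E u" "B \<subseteq> nbhd E w"
      using AB assms(1) by (auto simp: X_def Y_def nbhd_def)
  qed (use AB n_ge in auto)
  with free show False
    by contradiction
qed

lemma card_nbhd_outside_le: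
  assumes "v \<in> nbhd E c" "n - 4 \<le> card (nbhd E c)" "4 \<le> card (nbhd E v)"
    and "insert c (nbhd E c) \<subseteq> D"
  shows "card (nbhd E v - D) + card (nbhd E c) \<le> n - 2"
proof -
  have "card (nbhd E v - D) \<le> card (nbhd E v - insert c (nbhd E c))"
    using finite_nbhd[OF graph] assms(4) by (intro card_mono) auto
  then show ?thesis
    using card_nbhd_Un_le[OF assms(1-3)] card_nbhd_Un[OF graph assms(1)] by linarith
qed

lemma card_nbhd_add_outside_le:
  assumes "v \<in> nbhd E c" "n - 4 \<le> card (nbhd E c)" "insert c (nbhd E c) \<subseteq> D"
    and "card (nbhd E v) + k \<le> card (nbhd E c)" "k \<le> 2"
  shows "card (nbhd E v) + card (nbhd E v - D) + k + 2 \<le> n"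
proof (cases "4 \<le> card (nbhd E v)")
  case True
  then show ?thesis
    using card_nbhd_outside_le[OF assms(1,2) True assms(3)] assms(4) by linarith
next
  case False
  have "card (nbhd E v - D) \<le> card (nbhd E v)"
    using finite_nbhd[OF graph] by (intro card_mono) auto
  then show ?thesis
    using False assms(5) n_ge by linarith
qed

lemma peelable_small_graph:
  assumes "V \<noteq> {}" "card V \<le> n - 1"
  shows "peelable n E V"
proof (rule peelableI)
  show "V \<noteq> {}"
    by fact
  show "deficit n (card V) \<le> (\<Sum>v\<in>V. int n - 1 - int (card V))"
    using deficit_le_product[OF n_ge assms(2)] by simp
  fix v
  assume v: "v \<in> V"
  have "card (nbhd E v - V) = 0"
    by (metis Diff_eq_empty_iff card.empty nbhd_subset[OF graph])
  moreover have "card (nbhd E v) \<le> card V - 1" "1 \<le> card V"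
    using card_nbhd_le[OF graph v] v finite_V by (auto simp: Suc_le_eq card_gt_0_iff)
  ultimately show "int n - 1 - int (card V) \<le> slack n E v - int (card (nbhd E v - V))"
    unfolding slack_def by linarith
qed

lemma peelable_large_graph:
  assumes "V \<noteq> {}" "n \<le> card V" "\<And>v. v \<in> V \<Longrightarrow> card (nbhd E v) \<le> n - 4"
  shows "peelable n E V"
proof (rule peelableI)
  show "V \<noteq> {}"
    by fact
  show "deficit n (card V) \<le> (\<Sum>v\<in>V. 2)"
    using deficit_le_twice[OF n_ge assms(2)] by simp
  fix v
  assume "v \<in> V"
  moreover have "card (nbhd E v - V) = 0"
    by (metis Diff_eq_empty_iff card.empty nbhd_subset[OF graph])
  ultimately show "2 \<le> slack n E v - int (card (nbhd E v - V))"
    using assms(3) n_ge unfolding slack_def by fastforce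
qed

lemma peelable_closed_nbhd_of_high_degree:
  assumes "n - 1 \<le> card (nbhd E u)"
  shows "peelable n E (insert u (nbhd E u))"
proof -
  define D where "D = insert u (nbhd E u)"
  define x where "x = int (card (nbhd E u))"
  have nbr: "int n - 7 \<le> slack n E v - int (card (nbhd E v - D))" if v: "v \<in> nbhd E u" for v
  proof -
    have "\<not> 4 \<le> card (nbhd E v)"
      using card_nbhd_Un_le[OF v] card_nbhd_Un[OF graph v] assms by fastforce
    moreover have "u \<in> nbhd E v"
      using v nbhd_sym by fast
    then have "card (nbhd E v - D) < card (nbhd E v)"
      using finite_nbhd[OF graph] by (intro psubset_card_mono) (auto simp: D_def)
    ultimately show ?thesis
      unfolding slack_def by linarith
  qed
  have "nbhd E u - D = {}"
    by (auto simp: D_def)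
  then have "(\<Sum>v\<in>D. slack n E v - int (card (nbhd E v - D)))
      = int n - 2 - x + (\<Sum>v\<in>nbhd E u. slack n E v - int (card (nbhd E v - D)))"
    using finite_nbhd[OF graph] not_in_nbhd[OF graph] by (simp add: D_def slack_def x_def)
  moreover have "x * (int n - 7) \<le> (\<Sum>v\<in>nbhd E u. slack n E v - int (card (nbhd E v - D)))"
    using sum_mono[OF nbr] by (simp add: x_def)
  moreover have "4 * int n - 20 \<le> int n - 2 - x + x * (int n - 7)"
  proof -
    have "(int n - 1) * (int n - 8) \<le> x * (int n - 8)"
      using assms n_ge by (intro mult_right_mono) (auto simp: x_def)
    moreover have "0 \<le> (int n - 10) * (int n - 2)"
      using n_ge by simp
    ultimately show ?thesis
      by (simp add: algebra_simps)
  qed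
  ultimately show ?thesis
    using deficit_le[OF n_ge, of "card D"] unfolding peelable_def D_def by auto
qed

lemma peelable_closed_nbhd_max_degree_n_minus_2:
  assumes "card (nbhd E u) = n - 2" "\<And>v. v \<in> V \<Longrightarrow> card (nbhd E v) \<le> n - 2"
  shows "peelable n E (insert u (nbhd E u))"
proof (rule peelableI)
  let ?D = "insert u (nbhd E u)"
  show "?D \<noteq> {}"
    by simp
  have "card ?D = n - 1"
    using assms(1) n_ge finite_nbhd[OF graph] not_in_nbhd[OF graph] by simp
  then show "deficit n (card ?D) \<le> (\<Sum>v\<in>?D. 0)"
    using deficit_n_minus_1[OF n_ge] by simp
  fix v
  assume "v \<in> ?D"
  then consider "v = u" | "v \<in> nbhd E u"
    by blast
  then show "0 \<le> slack n E v - int (card (nbhd E v - ?D))"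
  proof cases
    case 1
    then show ?thesis
      using assms(1) n_ge by (simp add: slack_def subset_insertI)
  next
    case 2
    then have "v \<in> V"
      using nbhd_subset[OF graph] by blast
    then have deg: "card (nbhd E v) + 0 \<le> card (nbhd E u)"
      using assms by simp
    have "card (nbhd E v) + card (nbhd E v - ?D) + 0 + 2 \<le> n"
      by (intro card_nbhd_add_outside_le[OF 2 _ _ deg]) (use assms(1) n_ge in auto)
    then show ?thesis
      unfolding slack_def by linarith
  qed
qed

lemma peelable_nbhd_pair:
  assumes "w \<in> nbhd E u" "card (nbhd E u) = n - 3" "card (nbhd E w) = n - 3"
    and "card (nbhd E u \<union> nbhd E w) = n - 1"
    and "\<And>v. v \<in> V \<Longrightarrow> card (nbhd E v) \<le> n - 3"
  shows "peelable n E (nbhd E u \<union> nbhd E w)"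
proof (rule peelableI)
  let ?D = "nbhd E u \<union> nbhd E w"
  show "?D \<noteq> {}"
    using assms(1) by blast
  show "deficit n (card ?D) \<le> (\<Sum>v\<in>?D. 0)"
    using assms(4) deficit_n_minus_1[OF n_ge] by simp
  have "u \<in> nbhd E w"
    using assms(1) nbhd_sym by fast
  then have closed: "insert u (nbhd E u) \<subseteq> ?D" "insert w (nbhd E w) \<subseteq> ?D"
    using assms(1) by blast+
  fix v
  assume "v \<in> ?D"
  then obtain c where c: "v \<in> nbhd E c" "insert c (nbhd E c) \<subseteq> ?D" "card (nbhd E c) = n - 3"
    using closed assms(2,3) by (auto simp only: Un_iff)
  then have "v \<in> V"
    using nbhd_subset[OF graph] by blast
  then have deg: "card (nbhd E v) + 0 \<le> card (nbhd E c)"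
    using assms(5) c(3) by simp
  have "card (nbhd E v) + card (nbhd E v - ?D) + 0 + 2 \<le> n"
    by (intro card_nbhd_add_outside_le[OF c(1) _ c(2) deg]) (use c(3) in simp_all)
  then show "0 \<le> slack n E v - int (card (nbhd E v - ?D))"
    unfolding slack_def by linarith
qed

lemma peelable_closed_nbhd_without_pair:
  assumes "card (nbhd E u) = n - 3"
    and "\<And>w. w \<in> nbhd E u \<Longrightarrow> card (nbhd E w) = n - 3 \<Longrightarrow> card (nbhd E u \<union> nbhd E w) \<noteq> n - 1"
    and "\<And>v. v \<in> V \<Longrightarrow> card (nbhd E v) \<le> n - 3"
  shows "peelable n E (insert u (nbhd E u))"
proof (rule peelableI)
  let ?D = "insert u (nbhd E u)"
  show "?D \<noteq> {}"
    by simp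
  have "card ?D = n - 2"
    using assms(1) n_ge finite_nbhd[OF graph] not_in_nbhd[OF graph] by simp
  then show "deficit n (card ?D) \<le> (\<Sum>v\<in>?D. 1)"
    using deficit_n_minus_2[OF n_ge] by simp
  fix v
  assume "v \<in> ?D"
  then consider "v = u" | "v \<in> nbhd E u"
    by blast
  then show "1 \<le> slack n E v - int (card (nbhd E v - ?D))"
  proof cases
    case 1
    then show ?thesis
      using assms(1) n_ge by (simp add: slack_def subset_insertI)
  next
    case 2
    then have "v \<in> V"
      using nbhd_subset[OF graph] by blast
    then consider "card (nbhd E v) = n - 3" | "card (nbhd E v) + 1 \<le> card (nbhd E u)"
      using assms(1,3) n_ge by fastforce
    then show ?thesis
    proof cases
      case 1
      have "card (nbhd E u \<union> nbhd E v) \<le> n - 1"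
        by (rule card_nbhd_Un_le[OF 2]) (use assms(1) 1 n_ge in simp_all)
      then have "card (nbhd E u \<union> nbhd E v) \<le> n - 2"
        using assms(2)[OF 2 1] by linarith
      then have "card (nbhd E v - ?D) = 0"
        using card_nbhd_Un[OF graph 2] assms(1) n_ge by linarith
      then show ?thesis
        using 1 n_ge unfolding slack_def by linarith
    next
      case deg: 2
      have "card (nbhd E v) + card (nbhd E v - ?D) + 1 + 2 \<le> n"
        by (intro card_nbhd_add_outside_le[OF 2 _ _ deg]) (use assms(1) n_ge in auto)
      then show ?thesis
        unfolding slack_def by linarith
    qed
  qed
qed

lemma exists_peelable:
  assumes "V \<noteq> {}"
  obtains D where "D \<subseteq> V" "peelable n E D"
proof -
  define \<Delta> where "\<Delta> = Max ((\<lambda>v. card (nbhd E v)) ` V)"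
  have "\<Delta> \<in> (\<lambda>v. card (nbhd E v)) ` V"
    unfolding \<Delta>_def using finite_V assms by (intro Max_in) auto
  then obtain u where u: "u \<in> V" "card (nbhd E u) = \<Delta>"
    by auto
  have max: "card (nbhd E v) \<le> \<Delta>" if "v \<in> V" for v
    unfolding \<Delta>_def using that finite_V by simp
  have closed: "insert u (nbhd E u) \<subseteq> V"
    using u(1) nbhd_subset[OF graph] by blast
  consider "card V \<le> n - 1" | "n - 1 \<le> \<Delta>" | "\<Delta> = n - 2" | "\<Delta> = n - 3"
    | "\<Delta> \<le> n - 4" "n \<le> card V"
    by linarith
  then show ?thesis
  proof cases
    case 1
    with assms show ?thesis
      by (intro that[OF subset_refl] peelable_small_graph)
  next
    case 2
    with u(2) show ?thesis
      by (intro that[OF closed] peelable_closed_nbhd_of_high_degree) simp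
  next
    case 3
    with u(2) max show ?thesis
      by (intro that[OF closed] peelable_closed_nbhd_max_degree_n_minus_2) simp_all
  next
    case 4
    show ?thesis
    proof (cases "\<exists>w\<in>nbhd E u. card (nbhd E w) = n - 3 \<and> card (nbhd E u \<union> nbhd E w) = n - 1")
      case True
      then obtain w where w: "w \<in> nbhd E u" "card (nbhd E w) = n - 3"
        "card (nbhd E u \<union> nbhd E w) = n - 1"
        by blast
      have "nbhd E u \<union> nbhd E w \<subseteq> V"
        using nbhd_subset[OF graph] by blast
      moreover have "peelable n E (nbhd E u \<union> nbhd E w)"
        using w u(2) max 4 by (intro peelable_nbhd_pair) simp_all
      ultimately show ?thesis
        by (rule that)
    next
      case False
      with u(2) max 4 show ?thesis
        by (intro that[OF closed] peelable_closed_nbhd_without_pair) auto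
    qed
  next
    case 5
    with assms max show ?thesis
      by (intro that[OF subset_refl] peelable_large_graph) (auto intro: order_trans)
  qed
qed

end

lemma deficit_le_slack_sum_peel:
  assumes graph: "simple_graph V E" and "D \<subseteq> V" "10 \<le> n"
    and rest: "deficit n (card (V - D)) \<le> (\<Sum>v\<in>V - D. slack n {e \<in> E. e \<subseteq> V - D} v)"
    and "peelable n E D"
  shows "deficit n (card V) \<le> (\<Sum>v\<in>V. slack n E v)"
proof -
  have fin: "finite V" "finite D"
    using graph assms(2) finite_subset by (auto simp: simple_graph_def)
  have "slack n E v = slack n {e \<in> E. e \<subseteq> V - D} v - int (card (nbhd E v \<inter> D))" if "v \<in> V - D" for v
    using card_Int_Diff[of "nbhd E v" D] finite_nbhd[OF graph] nbhd_induced[OF graph that]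
    unfolding slack_def by simp
  then have "(\<Sum>v\<in>V - D. slack n E v)
      = (\<Sum>v\<in>V - D. slack n {e \<in> E. e \<subseteq> V - D} v) - int (\<Sum>v\<in>V - D. card (nbhd E v \<inter> D))"
    by (simp add: sum_subtractf of_nat_sum)
  also have "(\<Sum>v\<in>V - D. card (nbhd E v \<inter> D)) = (\<Sum>v\<in>D. card (nbhd E v \<inter> (V - D)))"
    using fin by (intro sum_card_nbhd_Int_swap) auto
  also have "\<dots> = (\<Sum>v\<in>D. card (nbhd E v - D))"
  proof -
    have "nbhd E v \<inter> (V - D) = nbhd E v - D" for v
      using nbhd_subset[OF graph, of v] by blast
    then show ?thesis
      by simp
  qed
  finally have "(\<Sum>v\<in>V - D. slack n E v)
      = (\<Sum>v\<in>V - D. slack n {e \<in> E. e \<subseteq> V - D} v) - (\<Sum>v\<in>D. int (card (nbhd E v - D)))"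
    by (simp add: of_nat_sum)
  moreover have "(\<Sum>v\<in>V. slack n E v) = (\<Sum>v\<in>V - D. slack n E v) + (\<Sum>v\<in>D. slack n E v)"
    using sum.subset_diff[OF assms(2) fin(1)] .
  moreover have "deficit n (card V) \<le> deficit n (card D) + deficit n (card (V - D))"
    using deficit_add_le[OF assms(3), of "card D" "card (V - D)"] card_Diff_subset[OF fin(2) assms(2)]
      card_mono[OF fin(1) assms(2)] by simp
  ultimately show ?thesis
    using rest assms(5) unfolding peelable_def by (simp add: sum_subtractf)
qed

theorem deficit_le_slack_sum:
  assumes "simple_graph V E" "\<not> contains_subgraph V E (T3_vertices n) (T3_edges n)" "10 \<le> n"
  shows "deficit n (card V) \<le> (\<Sum>v\<in>V. slack n E v)"
  using assms(1,2)
proof (induction "card V" arbitrary: V E rule: less_induct)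
  case less
  interpret T3_free V E n
    using less.prems assms(3) by unfold_locales
  show ?case
  proof (cases "V = {}")
    case False
    then obtain D where D: "D \<subseteq> V" "peelable n E D"
      by (rule exists_peelable)
    then have "card (V - D) < card V"
      using finite_V by (intro psubset_card_mono) (auto simp: peelable_def)
    moreover have "simple_graph (V - D) {e \<in> E. e \<subseteq> V - D}"
      using simple_graph_induced[OF graph] .
    moreover have "\<not> contains_subgraph (V - D) {e \<in> E. e \<subseteq> V - D} (T3_vertices n) (T3_edges n)"
      using free contains_subgraph_mono[of "V - D" "{e \<in> E. e \<subseteq> V - D}" _ _ V E] by blast
    ultimately show ?thesis
      using deficit_le_slack_sum_peel[OF graph D(1) n_ge _ D(2)] less.hyps by blast
  qed simp
qed

corollary T3_free_card_edges_le:
  assumes "simple_graph V E" "\<not> contains_subgraph V E (T3_vertices n) (T3_edges n)" "10 \<le> n"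
  shows "2 * int (card E) \<le> (int n - 2) * int (card V) - deficit n (card V)"
proof -
  have "(\<Sum>v\<in>V. slack n E v) = (\<Sum>v\<in>V. int n - 2) - (\<Sum>v\<in>V. int (card (nbhd E v)))"
    unfolding slack_def by (rule sum_subtractf)
  also have "\<dots> = (int n - 2) * int (card V) - int (\<Sum>v\<in>V. card (nbhd E v))"
    by (simp add: of_nat_sum)
  finally show ?thesis
    using deficit_le_slack_sum[OF assms] sum_card_nbhd[OF assms(1)] by simp
qed

section \<open>The extremal graph\<close>

lemma ex_eqI:
  assumes "simple_graph {0..<p} G" "\<not> contains_subgraph {0..<p} G VL EL"
    and "\<And>E. simple_graph {0..<p} E \<Longrightarrow> \<not> contains_subgraph {0..<p} E VL EL \<Longrightarrow> card E \<le> card G"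
  shows "ex p VL EL = card G"
proof -
  let ?S = "{card E |E. simple_graph {0..<p} E \<and> \<not> contains_subgraph {0..<p} E VL EL}"
  have "?S \<subseteq> {..card G}"
    using assms(3) by auto
  then have "finite ?S"
    using finite_subset by blast
  then show ?thesis
    unfolding ex_def using assms by (intro Max_eqI) auto
qed

definition clique_blocks :: "nat \<Rightarrow> nat \<Rightarrow> nat set set" where
  "clique_blocks p m = {{a, b} |a b. a < p \<and> b < p \<and> a \<noteq> b \<and> a div m = b div m}"

lemma simple_graph_clique_blocks: "simple_graph {0..<p} (clique_blocks p m)"
  unfolding simple_graph_def clique_blocks_def by auto

lemma nat_div_eq_iff: "0 < m \<Longrightarrow> x div m = q \<longleftrightarrow> q * m \<le> x \<and> x < q * m + m" for x :: nat
  by (auto intro: div_nat_eqI simp: algebra_simps dividend_less_times_div div_times_less_eq_dividend)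

lemma nbhd_clique_blocks:
  assumes "0 < m" "v < p"
  shows "nbhd (clique_blocks p m) v = {v div m * m ..< min p (v div m * m + m)} - {v}"
proof -
  have "nbhd (clique_blocks p m) v = {x \<in> {0..<p}. x div m = v div m} - {v}"
    using assms(2) by (auto simp: nbhd_def clique_blocks_def doubleton_eq_iff)
  also have "{x \<in> {0..<p}. x div m = v div m} = {v div m * m ..< min p (v div m * m + m)}"
    using assms(1) by (auto simp: nat_div_eq_iff)
  finally show ?thesis .
qed

lemma mem_div_block: "0 < m \<Longrightarrow> v \<in> {v div m * m ..< v div m * m + m}" for v :: nat
  using nat_div_eq_iff[of m v "v div m"] by simp

lemma T3_edges_center: "1 \<le> i \<Longrightarrow> i \<le> n - 4 \<Longrightarrow> {0, i} \<in> T3_edges n"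
  unfolding T3_edges_def by blast

lemma T3_edges_leaf_side: "n - 3 \<le> j \<Longrightarrow> j \<le> n - 1 \<Longrightarrow> {1, j} \<in> T3_edges n"
  unfolding T3_edges_def by blast

lemma clique_blocks_T3_free:
  assumes "6 \<le> n"
  shows "\<not> contains_subgraph {0..<p} (clique_blocks p (n - 1)) (T3_vertices n) (T3_edges n)"
proof
  let ?m = "n - 1"
  assume "contains_subgraph {0..<p} (clique_blocks p ?m) (T3_vertices n) (T3_edges n)"
  then obtain f where f: "inj_on f {0..<n}" "\<forall>e\<in>T3_edges n. f ` e \<in> clique_blocks p ?m"
    unfolding contains_subgraph_def T3_vertices_def by blast
  have same_block: "f i div ?m = f j div ?m" if "{i, j} \<in> T3_edges n" for i j
    using f(2) that unfolding clique_blocks_def by (fastforce simp: doubleton_eq_iff)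
  have block: "f i div ?m = f 0 div ?m" if i: "i < n" for i
  proof -
    consider "i = 0" | "1 \<le> i" "i \<le> n - 4" | "n - 3 \<le> i" "i \<le> n - 1"
      using i by (cases "i = 0"; cases "i \<le> n - 4") auto
    then show ?thesis
    proof cases
      case 2
      then show ?thesis
        using same_block[OF T3_edges_center] by simp
    next
      case 3
      have "f i div ?m = f 1 div ?m" "f 1 div ?m = f 0 div ?m"
        using same_block[OF T3_edges_leaf_side[OF 3]] same_block[OF T3_edges_center, of 1] assms by auto
      then show ?thesis
        by simp
    qed simp
  qed
  have "f i \<in> {f 0 div ?m * ?m ..< f 0 div ?m * ?m + ?m}" if "i < n" for i
    using block[OF that] nat_div_eq_iff[of ?m "f i" "f 0 div ?m"] assms by simp
  then have "f ` {0..<n} \<subseteq> {f 0 div ?m * ?m ..< f 0 div ?m * ?m + ?m}"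
    by auto
  then have "card (f ` {0..<n}) \<le> ?m"
    using card_mono[of "{f 0 div ?m * ?m ..< f 0 div ?m * ?m + ?m}"] by simp
  then show False
    using card_image[OF f(1)] assms by simp
qed

lemma card_clique_blocks:
  assumes "0 < m" "p = k * m + r" "r < m"
  shows "2 * int (card (clique_blocks p m)) = int k * int m * (int m - 1) + int r * (int r - 1)"
proof -
  have full: "int (card (nbhd (clique_blocks p m) v)) = int m - 1" if "v < k * m" for v
  proof -
    have "v div m < k"
      using that assms(1) by (simp add: div_less_iff_less_mult)
    then have "v div m * m + m \<le> p"
      using assms(2) by (metis add.commute mult_Suc Suc_leI mult_le_mono1 trans_le_add1)
    then show ?thesis
      using that assms nbhd_clique_blocks[OF assms(1), of v p] mem_div_block[OF assms(1), of v]
      by (simp add: min_absorb2)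
  qed
  have last: "int (card (nbhd (clique_blocks p m) v)) = int r - 1" if "k * m \<le> v" "v < p" for v
  proof -
    have "v div m = k"
      using that assms by (simp add: nat_div_eq_iff)
    then show ?thesis
      using that assms nbhd_clique_blocks[OF assms(1), of v p] by (simp add: min_absorb1 of_nat_diff)
  qed
  have "2 * int (card (clique_blocks p m)) = (\<Sum>v\<in>{0..<p}. int (card (nbhd (clique_blocks p m) v)))"
    using sum_card_nbhd[OF simple_graph_clique_blocks] by (simp flip: of_nat_sum)
  also have "\<dots> = (\<Sum>v\<in>{0..<k * m}. int (card (nbhd (clique_blocks p m) v)))
      + (\<Sum>v\<in>{k * m..<p}. int (card (nbhd (clique_blocks p m) v)))"
    using assms(2) by (simp add: sum.atLeastLessThan_concat)
  also have "\<dots> = int k * int m * (int m - 1) + int r * (int r - 1)"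
    using full last assms(2) by simp
  finally show ?thesis .
qed

theorem theorem4p1:
  fixes p n k r :: nat
  assumes "n \<ge> 10" and "p \<ge> n"
    and "k \<ge> 1" and "p = k * (n - 1) + r"
    and "r \<in> {0, 1, 2, n - 5, n - 4, n - 3, n - 2}"
  shows "2 * int (ex p (T3_vertices n) (T3_edges n))
           = (int n - 2) * int p - int r * (int n - 1 - int r)"
proof -
  let ?G = "clique_blocks p (n - 1)"
  have r: "r < n - 1" "p mod (n - 1) = r"
    using assms(1,4,5) by auto
  have p: "int p = int k * (int n - 1) + int r"
    using assms(1,4) by (simp add: of_nat_diff)
  have G: "2 * int (card ?G) = (int n - 2) * int p - int r * (int n - 1 - int r)"
    unfolding p using card_clique_blocks[OF _ assms(4) r(1)] assms(1) by (simp add: of_nat_diff algebra_simps)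
  have "card E \<le> card ?G"
    if "simple_graph {0..<p} E" "\<not> contains_subgraph {0..<p} E (T3_vertices n) (T3_edges n)" for E
    using T3_free_card_edges_le[OF that assms(1)] deficit_extremal_residue[of n p] assms(1,5) r G
    by simp
  then have "ex p (T3_vertices n) (T3_edges n) = card ?G"
    using simple_graph_clique_blocks clique_blocks_T3_free assms(1) by (intro ex_eqI) auto
  with G show ?thesis
    by simp
qed

end
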